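(* Let $G_i=(V_i,E_i)$ be a simple graph of maximum degree $\Delta_i$ and minimum degree $\delta_i$, $i\in\{1,2\}$, and let $S\subseteq V_1\times V_2$. Then: (i) If for some $i\in\{1,2\}$ and integer $k_i$, $P_{V_i}(S)$ is a $k_i$-paf set in $G_i$, then for every integer $k\in\{k_i+\Delta_j,\dots,\Delta_i+\Delta_j-2\}$, $S$ is a $k$-paf set in $G_1\times G_2$, where $j\in\{1,2\}$, $j\neq i$. (ii) If for integers $k_1,k_2$, $P_{V_1}(S)$ is a $k_1$-paf set in $G_1$ and $P_{V_2}(S)$ is a $k_2$-paf set in $G_2$, then for every integer $k\in\{k',\dots,\Delta_1+\Delta_2-2\}$, $S$ is a $k$-paf set in $G_1\times G_2$, where $k'=\max\{k_1+k_2-1,\;\min\{k_2-\delta_1,\,k_1-\delta_2\}\}$.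
   Context: All graphs are finite and simple. For a graph $G=(V,E)$, a set $S\subseteq V$ and $v\in V$, let $\delta_S(v)=|\{u\in S: uv\in E\}|$, $\overline{S}=V\setminus S$, and let $\partial S$ be the set of vertices of $\overline S$ adjacent to at least one vertex of $S$. For an integer $k$, a non-empty set $S\subseteq V$ is a defensive $k$-alliance if $\delta_S(v)\ge \delta_{\overline S}(v)+k$ for every $v\in S$; an offensive $k$-alliance if $\delta_S(v)\ge \delta_{\overline S}(v)+k$ for every $v\in\partial S$; and a powerful $k$-alliance if it is both a defensive $k$-alliance and an offensive $(k+2)$-alliance. A set $X\subseteq V$ is a powerful $k$-alliance free set ($k$-paf set) if no powerful $k$-alliance $S$ satisfies $S\subseteq X$. The Cartesian product $G_1\times G_2$ of $G_1=(V_1,E_1)$, $G_2=(V_2,E_2)$ has vertex set $V_1\times V_2$, with $(a,b)$ adjacent to $(c,d)$ iff either $a=c$ and $bd\in E_2$, or $b=d$ and $ac\in E_1$. For $A\subseteq V_1\times V_2$, $P_{V_i}(A)$ denotes the projection of $A$ onto $V_i$. *)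

theory Defs
  imports Main
begin

definition simple_graph :: "'a set \<Rightarrow> ('a \<Rightarrow> 'a \<Rightarrow> bool) \<Rightarrow> bool" where
  "simple_graph V E \<longleftrightarrow> finite V \<and> (\<forall>u v. E u v \<longrightarrow> u \<in> V \<and> v \<in> V)
     \<and> (\<forall>u v. E u v \<longrightarrow> E v u) \<and> (\<forall>v. \<not> E v v)"

definition degree :: "'a set \<Rightarrow> ('a \<Rightarrow> 'a \<Rightarrow> bool) \<Rightarrow> 'a \<Rightarrow> nat" where
  "degree V E v = card {u \<in> V. E v u}"

definition maxdeg :: "'a set \<Rightarrow> ('a \<Rightarrow> 'a \<Rightarrow> bool) \<Rightarrow> int" where
  "maxdeg V E = int (Max (degree V E ` V))"

definition mindeg :: "'a set \<Rightarrow> ('a \<Rightarrow> 'a \<Rightarrow> bool) \<Rightarrow> int" where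
  "mindeg V E = int (Min (degree V E ` V))"

definition dlt :: "('a \<Rightarrow> 'a \<Rightarrow> bool) \<Rightarrow> 'a set \<Rightarrow> 'a \<Rightarrow> int" where
  "dlt E S v = int (card {u \<in> S. E u v})"

definition boundary :: "'a set \<Rightarrow> ('a \<Rightarrow> 'a \<Rightarrow> bool) \<Rightarrow> 'a set \<Rightarrow> 'a set" where
  "boundary V E S = {v \<in> V - S. \<exists>u \<in> S. E u v}"

definition defensive_alliance :: "'a set \<Rightarrow> ('a \<Rightarrow> 'a \<Rightarrow> bool) \<Rightarrow> int \<Rightarrow> 'a set \<Rightarrow> bool" where
  "defensive_alliance V E k S \<longleftrightarrow> S \<noteq> {} \<and> S \<subseteq> V \<and>
     (\<forall>v \<in> S. dlt E S v \<ge> dlt E (V - S) v + k)"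

definition offensive_alliance :: "'a set \<Rightarrow> ('a \<Rightarrow> 'a \<Rightarrow> bool) \<Rightarrow> int \<Rightarrow> 'a set \<Rightarrow> bool" where
  "offensive_alliance V E k S \<longleftrightarrow> S \<noteq> {} \<and> S \<subseteq> V \<and>
     (\<forall>v \<in> boundary V E S. dlt E S v \<ge> dlt E (V - S) v + k)"

definition powerful_alliance :: "'a set \<Rightarrow> ('a \<Rightarrow> 'a \<Rightarrow> bool) \<Rightarrow> int \<Rightarrow> 'a set \<Rightarrow> bool" where
  "powerful_alliance V E k S \<longleftrightarrow> defensive_alliance V E k S \<and> offensive_alliance V E (k + 2) S"

definition paf_set :: "'a set \<Rightarrow> ('a \<Rightarrow> 'a \<Rightarrow> bool) \<Rightarrow> int \<Rightarrow> 'a set \<Rightarrow> bool" where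
  "paf_set V E k X \<longleftrightarrow> X \<subseteq> V \<and> (\<forall>S. powerful_alliance V E k S \<longrightarrow> \<not> S \<subseteq> X)"

definition cart_adj :: "('a \<Rightarrow> 'a \<Rightarrow> bool) \<Rightarrow> ('b \<Rightarrow> 'b \<Rightarrow> bool) \<Rightarrow> 'a \<times> 'b \<Rightarrow> 'a \<times> 'b \<Rightarrow> bool" where
  "cart_adj E1 E2 x y \<longleftrightarrow> (fst x = fst y \<and> E2 (snd x) (snd y)) \<or> (snd x = snd y \<and> E1 (fst x) (fst y))"

end

theory Submission
  imports Defs
begin

(* For T \<subseteq> V and a vertex v, the margin of v with respect to T is the
   number of neighbours of v inside T minus the number outside T; T is a
   powerful k-alliance iff every vertex of T has margin at least k and every
   boundary vertex has margin at least k + 2.  In G1 \<times> G2 the margin of a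
   vertex (a, b) splits as the margin of a w.r.t. the row fibre of A in G1
   plus the margin of b w.r.t. the column fibre of A in G2, and the row fibre
   is contained in the projection fst ` A.  From this we show, for a powerful
   k-alliance A of G1 \<times> G2:
     (a) if k \<ge> k1 + \<Delta>2 then fst ` A is a powerful k1-alliance of G1;
     (b) if k \<ge> k1 + k2 - 1 and fst ` A is not a powerful k1-alliance, then
         either some column fibre of A is a powerful k2-alliance of G2 or
         k \<le> k1 - 1 - \<delta>2.
   Each statement is proved for the first coordinate only; the second
   coordinate follows because swapping coordinates is a graph isomorphism
   G1 \<times> G2 \<cong> G2 \<times> G1 and alliances are invariant under isomorphism.
   Part (i) of the theorem is (a) and its mirror image.  For part (ii), the
   paf hypotheses rule out powerful projections and fibres, so (b) and its
   mirror image give k < k1 - \<delta>2 and k < k2 - \<delta>1, contradicting the lower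
   bound on k. *)

definition margin :: "'a set \<Rightarrow> ('a \<Rightarrow> 'a \<Rightarrow> bool) \<Rightarrow> 'a set \<Rightarrow> 'a \<Rightarrow> int" where
  "margin V E T v = dlt E T v - dlt E (V - T) v"

lemma powerful_alliance_iff_margin:
  "powerful_alliance V E k T \<longleftrightarrow> T \<noteq> {} \<and> T \<subseteq> V \<and> (\<forall>v\<in>T. k \<le> margin V E T v)
     \<and> (\<forall>v\<in>boundary V E T. k + 2 \<le> margin V E T v)"
  unfolding powerful_alliance_def defensive_alliance_def offensive_alliance_def margin_def
  by auto

lemma dlt_mono:
  assumes "simple_graph V E" "T \<subseteq> T'"
  shows "dlt E T v \<le> dlt E T' v"
proof -
  have "finite {u \<in> T'. E u v}"
    using assms(1) unfolding simple_graph_def by (auto intro: finite_subset)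
  then show ?thesis unfolding dlt_def using assms(2) by (auto intro: card_mono)
qed

lemma margin_mono:
  assumes "simple_graph V E" "T \<subseteq> T'"
  shows "margin V E T v \<le> margin V E T' v"
proof -
  have "dlt E (V - T') v \<le> dlt E (V - T) v" by (rule dlt_mono[OF assms(1)]) (use assms(2) in blast)
  then show ?thesis using dlt_mono[OF assms, of v] unfolding margin_def by linarith
qed

lemma dlt_add_complement:
  assumes "simple_graph V E"
  shows "dlt E T v + dlt E (V - T) v = int (degree V E v)"
proof -
  let ?N = "{u \<in> V. E v u}"
  have "finite ?N" using assms unfolding simple_graph_def by auto
  moreover have "{u \<in> T. E u v} = ?N \<inter> T" and "{u \<in> V - T. E u v} = ?N - T"
    using assms unfolding simple_graph_def by blast+
  ultimately show ?thesis unfolding dlt_def degree_def using card_Int_Diff[of ?N T] by simp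
qed

lemma margin_le_degree: "simple_graph V E \<Longrightarrow> margin V E T v \<le> int (degree V E v)"
  using dlt_add_complement[of V E T v] unfolding margin_def dlt_def by linarith

lemma margin_empty: "simple_graph V E \<Longrightarrow> margin V E {} v = - int (degree V E v)"
  using dlt_add_complement[of V E "{}" v] unfolding margin_def dlt_def by simp

lemma degree_le_maxdeg: "simple_graph V E \<Longrightarrow> v \<in> V \<Longrightarrow> int (degree V E v) \<le> maxdeg V E"
  unfolding maxdeg_def simple_graph_def by simp

lemma mindeg_le_degree: "simple_graph V E \<Longrightarrow> v \<in> V \<Longrightarrow> mindeg V E \<le> int (degree V E v)"
  unfolding mindeg_def simple_graph_def by simp

section \<open>Invariance under graph isomorphism\<close>

lemma dlt_image:
  assumes "inj f" and "\<And>u v. F (f u) (f v) = E u v"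
  shows "dlt F (f ` T) (f v) = dlt E T v"
proof -
  have "{u \<in> f ` T. F u (f v)} = f ` {u \<in> T. E u v}" using assms(2) by auto
  then show ?thesis unfolding dlt_def
    by (simp add: card_image inj_on_subset[OF assms(1)])
qed

lemma boundary_image:
  assumes "inj f" and "\<And>u v. F (f u) (f v) = E u v"
  shows "boundary (f ` V) F (f ` T) = f ` boundary V E T"
  unfolding boundary_def image_set_diff[OF assms(1), symmetric] using assms(2) by auto

lemma margin_image:
  assumes "inj f" and "\<And>u v. F (f u) (f v) = E u v"
  shows "margin (f ` V) F (f ` T) (f v) = margin V E T v"
  unfolding margin_def image_set_diff[OF assms(1), symmetric] dlt_image[where F=F and E=E, OF assms] ..

lemma powerful_alliance_image:
  assumes "inj f" and "\<And>u v. F (f u) (f v) = E u v"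
  shows "powerful_alliance (f ` V) F k (f ` T) \<longleftrightarrow> powerful_alliance V E k T"
  unfolding powerful_alliance_iff_margin boundary_image[where F=F and E=E, OF assms]
    inj_image_subset_iff[OF assms(1)]
  by (simp add: margin_image[where F=F and E=E, OF assms])

lemma paf_set_image:
  assumes "inj f" and "\<And>u v. F (f u) (f v) = E u v"
  shows "paf_set (f ` V) F k (f ` X) \<longleftrightarrow> paf_set V E k X"
proof
  assume paf: "paf_set (f ` V) F k (f ` X)"
  show "paf_set V E k X" unfolding paf_set_def
  proof (intro conjI allI impI notI)
    show "X \<subseteq> V" using paf inj_image_subset_iff[OF assms(1)] unfolding paf_set_def by blast
  next
    fix T assume "powerful_alliance V E k T" "T \<subseteq> X"
    then have "powerful_alliance (f ` V) F k (f ` T)" "f ` T \<subseteq> f ` X"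
      using powerful_alliance_image[where F=F and E=E, OF assms] by auto
    then show False using paf unfolding paf_set_def by blast
  qed
next
  assume paf: "paf_set V E k X"
  show "paf_set (f ` V) F k (f ` X)" unfolding paf_set_def
  proof (intro conjI allI impI notI)
    show "f ` X \<subseteq> f ` V" using paf unfolding paf_set_def by blast
  next
    fix T assume pa: "powerful_alliance (f ` V) F k T" and TX: "T \<subseteq> f ` X"
    then have T: "T = f ` (f -` T)" by auto
    have "powerful_alliance V E k (f -` T)"
      using pa powerful_alliance_image[where F=F and E=E, OF assms, of V k "f -` T"] T by simp
    moreover have "f -` T \<subseteq> X" using TX assms(1) by (auto dest: injD)
    ultimately show False using paf unfolding paf_set_def by blast
  qed
qed

lemma cart_adj_swap: "cart_adj E2 E1 (prod.swap x) (prod.swap y) = cart_adj E1 E2 x y"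
  unfolding cart_adj_def by auto

lemma powerful_alliance_cart_swap:
  "powerful_alliance (V2 \<times> V1) (cart_adj E2 E1) k (prod.swap ` A)
     \<longleftrightarrow> powerful_alliance (V1 \<times> V2) (cart_adj E1 E2) k A"
  using powerful_alliance_image[where F="cart_adj E2 E1" and E="cart_adj E1 E2",
      OF inj_swap cart_adj_swap, of "V1 \<times> V2"]
  by (simp only: product_swap)

lemma paf_set_cart_swap:
  "paf_set (V2 \<times> V1) (cart_adj E2 E1) k (prod.swap ` S)
     \<longleftrightarrow> paf_set (V1 \<times> V2) (cart_adj E1 E2) k S"
  using paf_set_image[where F="cart_adj E2 E1" and E="cart_adj E1 E2",
      OF inj_swap cart_adj_swap, of "V1 \<times> V2"]
  by (simp only: product_swap)

section \<open>Margins in the Cartesian product\<close>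

text \<open>The neighbours of (a, b) in A lie in the row of b or in the column of a.\<close>
lemma dlt_cart:
  assumes G1: "simple_graph V1 E1" and G2: "simple_graph V2 E2"
  shows "dlt (cart_adj E1 E2) A (a, b) = dlt E1 {x. (x, b) \<in> A} a + dlt E2 {y. (a, y) \<in> A} b"
proof -
  let ?P = "{x \<in> {x. (x, b) \<in> A}. E1 x a}"
  let ?Q = "{y \<in> {y. (a, y) \<in> A}. E2 y b}"
  have split: "{u \<in> A. cart_adj E1 E2 u (a, b)} = (\<lambda>x. (x, b)) ` ?P \<union> (\<lambda>y. (a, y)) ` ?Q"
    unfolding cart_adj_def by auto
  have "finite ?P" using G1 unfolding simple_graph_def by (auto intro: finite_subset)
  moreover have "finite ?Q" using G2 unfolding simple_graph_def by (auto intro: finite_subset)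
  moreover have "(\<lambda>x. (x, b)) ` ?P \<inter> (\<lambda>y. (a, y)) ` ?Q = {}"
    using G1 unfolding simple_graph_def by auto
  ultimately have "card {u \<in> A. cart_adj E1 E2 u (a, b)} = card ?P + card ?Q"
    unfolding split by (simp add: card_Un_disjoint card_image inj_on_def)
  then show ?thesis unfolding dlt_def by simp
qed

lemma margin_cart:
  assumes G1: "simple_graph V1 E1" and G2: "simple_graph V2 E2"
    and a: "a \<in> V1" and b: "b \<in> V2"
  shows "margin (V1 \<times> V2) (cart_adj E1 E2) A (a, b) =
     margin V1 E1 {x. (x, b) \<in> A} a + margin V2 E2 {y. (a, y) \<in> A} b"
proof -
  have "{x. (x, b) \<in> V1 \<times> V2 - A} = V1 - {x. (x, b) \<in> A}"
    and "{y. (a, y) \<in> V1 \<times> V2 - A} = V2 - {y. (a, y) \<in> A}" using a b by auto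
  then show ?thesis unfolding margin_def dlt_cart[OF G1 G2] by simp
qed

text \<open>Replacing the row fibre by the whole projection fst ` A only increases
  the first summand; this is the estimate used throughout.\<close>
lemma margin_cart_le:
  assumes G1: "simple_graph V1 E1" and G2: "simple_graph V2 E2"
    and a: "a \<in> V1" and b: "b \<in> V2"
  shows "margin (V1 \<times> V2) (cart_adj E1 E2) A (a, b) \<le>
     margin V1 E1 (fst ` A) a + margin V2 E2 {y. (a, y) \<in> A} b"
proof -
  have "{x. (x, b) \<in> A} \<subseteq> fst ` A" by force
  then show ?thesis using margin_cart[OF assms, of A] margin_mono[OF G1] by fastforce
qed

lemma projection_boundary_lift:
  assumes "A \<subseteq> V1 \<times> V2" and "a \<in> boundary V1 E1 (fst ` A)"
  obtains b where "b \<in> V2" "(a, b) \<in> boundary (V1 \<times> V2) (cart_adj E1 E2) A"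
    "{y. (a, y) \<in> A} = {}"
proof -
  from assms(2) obtain a' b where a: "a \<in> V1" "a \<notin> fst ` A" and a'b: "(a', b) \<in> A" "E1 a' a"
    unfolding boundary_def by auto
  have "(a, b) \<in> boundary (V1 \<times> V2) (cart_adj E1 E2) A"
    using a a'b assms(1) unfolding boundary_def cart_adj_def by force
  moreover have "{y. (a, y) \<in> A} = {}" using a(2) by force
  ultimately show thesis using that a'b assms(1) by blast
qed

lemma projection_boundary_margin:
  assumes G1: "simple_graph V1 E1" and G2: "simple_graph V2 E2"
    and pa: "powerful_alliance (V1 \<times> V2) (cart_adj E1 E2) k A"
    and a: "a \<in> boundary V1 E1 (fst ` A)"
  obtains b where "b \<in> V2" "k + 2 + int (degree V2 E2 b) \<le> margin V1 E1 (fst ` A) a"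
proof -
  have AV: "A \<subseteq> V1 \<times> V2" using pa unfolding powerful_alliance_iff_margin by blast
  obtain b where b: "b \<in> V2" and ab: "(a, b) \<in> boundary (V1 \<times> V2) (cart_adj E1 E2) A"
    and col: "{y. (a, y) \<in> A} = {}"
    using projection_boundary_lift[OF AV a] .
  have "a \<in> V1" using a unfolding boundary_def by blast
  then have "k + 2 \<le> margin V1 E1 (fst ` A) a + margin V2 E2 {} b"
    using pa ab margin_cart_le[OF G1 G2 _ b, of a A] col
    unfolding powerful_alliance_iff_margin by fastforce
  then show thesis using that b margin_empty[OF G2] by simp
qed

lemma projection_powerful:
  assumes G1: "simple_graph V1 E1" and G2: "simple_graph V2 E2"
    and pa: "powerful_alliance (V1 \<times> V2) (cart_adj E1 E2) k A"
    and kk: "k1 + maxdeg V2 E2 \<le> k"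
  shows "powerful_alliance V1 E1 k1 (fst ` A)"
  unfolding powerful_alliance_iff_margin
proof (intro conjI ballI)
  have A: "A \<noteq> {}" "A \<subseteq> V1 \<times> V2"
    and inner: "\<forall>v\<in>A. k \<le> margin (V1 \<times> V2) (cart_adj E1 E2) A v"
    using pa unfolding powerful_alliance_iff_margin by blast+
  then show "fst ` A \<noteq> {}" "fst ` A \<subseteq> V1" by auto
  fix a assume "a \<in> fst ` A"
  then obtain b where ab: "(a, b) \<in> A" by force
  then have a: "a \<in> V1" and b: "b \<in> V2" using A by auto
  have "k \<le> margin V1 E1 (fst ` A) a + margin V2 E2 {y. (a, y) \<in> A} b"
    using inner ab margin_cart_le[OF G1 G2 a b, of A] by fastforce
  moreover have "margin V2 E2 {y. (a, y) \<in> A} b \<le> maxdeg V2 E2"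
    using margin_le_degree[OF G2] degree_le_maxdeg[OF G2 b] order_trans by blast
  ultimately show "k1 \<le> margin V1 E1 (fst ` A) a" using kk by linarith
next
  fix a assume "a \<in> boundary V1 E1 (fst ` A)"
  then obtain b where "k + 2 + int (degree V2 E2 b) \<le> margin V1 E1 (fst ` A) a"
    using projection_boundary_margin[OF G1 G2 pa] by blast
  moreover have "0 \<le> maxdeg V2 E2" unfolding maxdeg_def by simp
  ultimately show "k1 + 2 \<le> margin V1 E1 (fst ` A) a" using kk by linarith
qed

lemma fibre_powerful:
  assumes G1: "simple_graph V1 E1" and G2: "simple_graph V2 E2"
    and pa: "powerful_alliance (V1 \<times> V2) (cart_adj E1 E2) k A"
    and a: "a \<in> fst ` A" and low: "margin V1 E1 (fst ` A) a < k1"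
    and kk: "k1 + k2 - 1 \<le> k"
  shows "powerful_alliance V2 E2 k2 {y. (a, y) \<in> A}"
  unfolding powerful_alliance_iff_margin
proof (intro conjI ballI)
  show "{y. (a, y) \<in> A} \<noteq> {}" using a by force
  show "{y. (a, y) \<in> A} \<subseteq> V2" using pa unfolding powerful_alliance_iff_margin by auto
next
  fix b assume "b \<in> {y. (a, y) \<in> A}"
  then have ab: "(a, b) \<in> A" by simp
  then have "a \<in> V1" "b \<in> V2" using pa unfolding powerful_alliance_iff_margin by auto
  then have "k \<le> margin V1 E1 (fst ` A) a + margin V2 E2 {y. (a, y) \<in> A} b"
    using pa ab margin_cart_le[OF G1 G2, of a b A]
    unfolding powerful_alliance_iff_margin by fastforce
  then show "k2 \<le> margin V2 E2 {y. (a, y) \<in> A} b" using low kk by linarith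
next
  fix b assume "b \<in> boundary V2 E2 {y. (a, y) \<in> A}"
  then obtain b' where b: "b \<in> V2" "(a, b) \<notin> A" and b': "(a, b') \<in> A" "E2 b' b"
    unfolding boundary_def by auto
  have aV: "a \<in> V1" using a pa unfolding powerful_alliance_iff_margin by auto
  have "(a, b) \<in> boundary (V1 \<times> V2) (cart_adj E1 E2) A"
    using aV b b' unfolding boundary_def cart_adj_def by force
  then have "k + 2 \<le> margin V1 E1 (fst ` A) a + margin V2 E2 {y. (a, y) \<in> A} b"
    using pa margin_cart_le[OF G1 G2 aV b(1), of A]
    unfolding powerful_alliance_iff_margin by fastforce
  then show "k2 + 2 \<le> margin V2 E2 {y. (a, y) \<in> A} b" using low kk by linarith
qed

text \<open>Statement (b): if neither the projection nor any column fibre is a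
  powerful alliance, the failure must occur on the boundary of the projection,
  which bounds k from above.\<close>
lemma projection_failure_bound:
  assumes G1: "simple_graph V1 E1" and G2: "simple_graph V2 E2"
    and pa: "powerful_alliance (V1 \<times> V2) (cart_adj E1 E2) k A"
    and kk: "k1 + k2 - 1 \<le> k"
    and not_proj: "\<not> powerful_alliance V1 E1 k1 (fst ` A)"
    and not_fibre: "\<And>a. \<not> powerful_alliance V2 E2 k2 {y. (a, y) \<in> A}"
  shows "k + 1 + mindeg V2 E2 \<le> k1"
proof -
  have "A \<noteq> {}" "A \<subseteq> V1 \<times> V2" using pa unfolding powerful_alliance_iff_margin by blast+
  then have "fst ` A \<noteq> {}" "fst ` A \<subseteq> V1" by auto
  then have fails: "(\<exists>a\<in>fst ` A. margin V1 E1 (fst ` A) a < k1) \<or>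
      (\<exists>a\<in>boundary V1 E1 (fst ` A). margin V1 E1 (fst ` A) a < k1 + 2)"
    using not_proj unfolding powerful_alliance_iff_margin by (auto simp: not_le)
  have "\<not> (\<exists>a\<in>fst ` A. margin V1 E1 (fst ` A) a < k1)"
    using fibre_powerful[OF G1 G2 pa _ _ kk] not_fibre by blast
  then obtain a where "a \<in> boundary V1 E1 (fst ` A)" and low: "margin V1 E1 (fst ` A) a < k1 + 2"
    using fails by blast
  then obtain b where "b \<in> V2" "k + 2 + int (degree V2 E2 b) \<le> margin V1 E1 (fst ` A) a"
    using projection_boundary_margin[OF G1 G2 pa] by blast
  then show ?thesis using low mindeg_le_degree[OF G2] by fastforce
qed

lemma paf_product_fst:
  assumes G1: "simple_graph V1 E1" and G2: "simple_graph V2 E2"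
    and S: "S \<subseteq> V1 \<times> V2"
    and paf: "paf_set V1 E1 k1 (fst ` S)" and kk: "k1 + maxdeg V2 E2 \<le> k"
  shows "paf_set (V1 \<times> V2) (cart_adj E1 E2) k S"
  unfolding paf_set_def
proof (intro conjI allI impI notI)
  show "S \<subseteq> V1 \<times> V2" by (rule S)
  fix A assume "powerful_alliance (V1 \<times> V2) (cart_adj E1 E2) k A" and "A \<subseteq> S"
  then have "powerful_alliance V1 E1 k1 (fst ` A)" and "fst ` A \<subseteq> fst ` S"
    using projection_powerful[OF G1 G2 _ kk] by auto
  then show False using paf unfolding paf_set_def by blast
qed

lemma paf_product_snd:
  assumes G1: "simple_graph V1 E1" and G2: "simple_graph V2 E2"
    and S: "S \<subseteq> V1 \<times> V2"
    and paf: "paf_set V2 E2 k2 (snd ` S)" and kk: "k2 + maxdeg V1 E1 \<le> k"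
  shows "paf_set (V1 \<times> V2) (cart_adj E1 E2) k S"
proof -
  have "prod.swap ` S \<subseteq> V2 \<times> V1" using S by auto
  moreover have "fst ` prod.swap ` S = snd ` S" by force
  ultimately have "paf_set (V2 \<times> V1) (cart_adj E2 E1) k (prod.swap ` S)"
    using paf_product_fst[OF G2 G1 _ _ kk] paf by simp
  then show ?thesis using paf_set_cart_swap by blast
qed

lemma paf_product_both:
  assumes G1: "simple_graph V1 E1" and G2: "simple_graph V2 E2"
    and S: "S \<subseteq> V1 \<times> V2"
    and paf1: "paf_set V1 E1 k1 (fst ` S)" and paf2: "paf_set V2 E2 k2 (snd ` S)"
    and kk: "max (k1 + k2 - 1) (min (k2 - mindeg V1 E1) (k1 - mindeg V2 E2)) \<le> k"
  shows "paf_set (V1 \<times> V2) (cart_adj E1 E2) k S"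
  unfolding paf_set_def
proof (intro conjI allI impI notI)
  show "S \<subseteq> V1 \<times> V2" by (rule S)
  fix A assume pa: "powerful_alliance (V1 \<times> V2) (cart_adj E1 E2) k A" and AS: "A \<subseteq> S"
  have k12: "k1 + k2 - 1 \<le> k" "k2 + k1 - 1 \<le> k" using kk by auto
  have not_pa1: "\<not> powerful_alliance V1 E1 k1 T" if "T \<subseteq> fst ` S" for T
    using paf1 that unfolding paf_set_def by blast
  have not_pa2: "\<not> powerful_alliance V2 E2 k2 T" if "T \<subseteq> snd ` S" for T
    using paf2 that unfolding paf_set_def by blast
  have "k + 1 + mindeg V2 E2 \<le> k1"
  proof (rule projection_failure_bound[OF G1 G2 pa k12(1)])
    show "\<not> powerful_alliance V1 E1 k1 (fst ` A)" using AS by (intro not_pa1) auto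
    show "\<not> powerful_alliance V2 E2 k2 {y. (a, y) \<in> A}" for a
      using AS by (intro not_pa2) force
  qed
  moreover have "k + 1 + mindeg V1 E1 \<le> k2"
  proof (rule projection_failure_bound[OF G2 G1 _ k12(2)])
    show "powerful_alliance (V2 \<times> V1) (cart_adj E2 E1) k (prod.swap ` A)"
      using pa powerful_alliance_cart_swap by blast
    show "\<not> powerful_alliance V2 E2 k2 (fst ` prod.swap ` A)" using AS by (intro not_pa2) force
    show "\<not> powerful_alliance V1 E1 k1 {x. (b, x) \<in> prod.swap ` A}" for b
      using AS by (intro not_pa1) force
  qed
  ultimately show False using kk by linarith
qed

text \<open>The main theorem.\<close>
theorem theorem5:
  fixes V1 :: "'a set" and E1 :: "'a \<Rightarrow> 'a \<Rightarrow> bool"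
    and V2 :: "'b set" and E2 :: "'b \<Rightarrow> 'b \<Rightarrow> bool"
    and S :: "('a \<times> 'b) set"
  assumes G1: "simple_graph V1 E1" and G2: "simple_graph V2 E2"
    and S: "S \<subseteq> V1 \<times> V2"
  shows
    "(\<forall>k1 k. paf_set V1 E1 k1 (fst ` S) \<longrightarrow>
        k1 + maxdeg V2 E2 \<le> k \<longrightarrow> k \<le> maxdeg V1 E1 + maxdeg V2 E2 - 2 \<longrightarrow>
        paf_set (V1 \<times> V2) (cart_adj E1 E2) k S)
   \<and> (\<forall>k2 k. paf_set V2 E2 k2 (snd ` S) \<longrightarrow>
        k2 + maxdeg V1 E1 \<le> k \<longrightarrow> k \<le> maxdeg V1 E1 + maxdeg V2 E2 - 2 \<longrightarrow>
        paf_set (V1 \<times> V2) (cart_adj E1 E2) k S)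
   \<and> (\<forall>k1 k2 k. paf_set V1 E1 k1 (fst ` S) \<longrightarrow> paf_set V2 E2 k2 (snd ` S) \<longrightarrow>
        max (k1 + k2 - 1) (min (k2 - mindeg V1 E1) (k1 - mindeg V2 E2)) \<le> k \<longrightarrow>
        k \<le> maxdeg V1 E1 + maxdeg V2 E2 - 2 \<longrightarrow>
        paf_set (V1 \<times> V2) (cart_adj E1 E2) k S)"
  using paf_product_fst[OF G1 G2 S] paf_product_snd[OF G1 G2 S] paf_product_both[OF G1 G2 S]
  by blast

end
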